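(* Let $\varepsilon>0$ and $k\ge1$. There exist datasets $D_1,D_2,D_3$ with $(D_1,D_2)$ and $(D_2,D_3)$ neighboring pairs, and a sequence $Q$ of $k$ counting queries, such that running VanillaSVT$(\cdot,Q,\theta=0,\lambda,t=1)$ (described below), the output $E$ with $o_1=\dots=o_{k-1}=\bot$ and $o_k=1$ satisfies $\frac{p_{D_1}(E)}{p_{D_3}(E)}=e^{k/\lambda}$, where $p_D(E)$ is the output probability density at $E$ on input $D$. Consequently VanillaSVT with $t=1$ does not satisfy $\varepsilon$-differential privacy whenever $\lambda<\frac{k}{2\varepsilon}$.
   Context: $\mathrm{Lap}(\lambda)$ is the Laplace distribution with density $\frac{1}{2\lambda}e^{-|y|/\lambda}$. A dataset is a finite multiset of tuples; two datasets are neighboring if one is obtained by inserting one tuple into the other. A counting query counts the tuples satisfying a predicate. VanillaSVT$(D,Q=(q_1,\dots,q_k),\theta,\lambda,t)$: set $cnt=0$; draw $\hat\theta=\theta+\mathrm{Lap}(\lambda)$ once; for $i=1,\dots,k$: draw $\hat q_i(D)=q_i(D)+\mathrm{Lap}(t\lambda)$ (independent noises); if $\hat q_i(D)>\hat\theta$, output $o_i=\hat q_i(D)$, increase $cnt$ by one and stop if $cnt\ge t$; otherwise output $o_i=\bot$. An algorithm is $\varepsilon$-differentially private if for all neighboring $D,D'$ the output densities satisfy $p_D(O)\le e^{\varepsilon}p_{D'}(O)$ for all outputs $O$. *)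

theory Defs
  imports "HOL-Analysis.Analysis" "HOL-Library.Multiset"
begin

definition neighboring :: "'a multiset \<Rightarrow> 'a multiset \<Rightarrow> bool" where
  "neighboring D D' \<longleftrightarrow> (\<exists>x. D' = add_mset x D) \<or> (\<exists>x. D = add_mset x D')"

definition count_query :: "('a \<Rightarrow> bool) \<Rightarrow> 'a multiset \<Rightarrow> real" where
  "count_query P D = real (size (filter_mset P D))"

definition lap_pdf :: "real \<Rightarrow> real \<Rightarrow> real \<Rightarrow> real" where
  "lap_pdf lam mu y = exp (- \<bar>y - mu\<bar> / lam) / (2 * lam)"

definition lap_cdf :: "real \<Rightarrow> real \<Rightarrow> real \<Rightarrow> real" where
  "lap_cdf lam mu z = (LINT y|lborel. indicator {..z} y * lap_pdf lam mu y)"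

text \<open>Output density of VanillaSVT(D, Q, theta, lam, t = 1) at an output sequence os,
  where None stands for bottom and Some v for a numerical output v.
  Noisy threshold: theta + Lap(lam); noisy queries: q_i(D) + Lap(t*lam) = q_i(D) + Lap(lam).
  With t = 1 the algorithm stops after the first positive answer, so the possible outputs are
  bottom^(j-1) followed by a value (1 <= j <= k), or bottom^k.  The density of the continuous
  component is taken w.r.t. Lebesgue measure in the numerical coordinate; the density of the
  all-bottom output is its probability.  Conditioning on the noisy threshold z:
  bottom at position i has probability P(q_i(D) + Lap(lam) <= z), and a value v at position j
  has density lap_pdf lam (q_j(D)) v and requires v > z.\<close>

definition svt1_density ::
  "('a \<Rightarrow> bool) list \<Rightarrow> real \<Rightarrow> real \<Rightarrow> 'a multiset \<Rightarrow> real option list \<Rightarrow> real" where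
  "svt1_density Q theta lam D os =
     (if os = replicate (length Q) None then
        (LINT z|lborel. lap_pdf lam theta z *
            (\<Prod>i<length Q. lap_cdf lam (count_query (Q ! i) D) z))
      else if (\<exists>j v. 1 \<le> j \<and> j \<le> length Q \<and> os = replicate (j - 1) None @ [Some v]) then
        (let j = length os; v = the (last os) in
          (LINT z|lborel. lap_pdf lam theta z *
            (\<Prod>i<j - 1. lap_cdf lam (count_query (Q ! i) D) z) *
            lap_pdf lam (count_query (Q ! (j - 1)) D) v *
            indicator {..<v} z))
      else 0)"

definition svt1_dp :: "real \<Rightarrow> ('a \<Rightarrow> bool) list \<Rightarrow> real \<Rightarrow> real \<Rightarrow> bool" where
  "svt1_dp eps Q theta lam \<longleftrightarrow>
     (\<forall>D D' os. neighboring D D' \<longrightarrow>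
        svt1_density Q theta lam D os \<le> exp eps * svt1_density Q theta lam D' os)"

end

theory Submission
  imports Defs
begin

(* With Q = k copies of the predicate x = 0, the datasets {0}, {0,0}, {0,0,1} have query answers
   c = 1, 2, 2.  On the output with value v = 1, the noisy threshold z lies below v <= c, so every
   Laplace factor of the density is an explicit exponential: each of the k - 1 cdf factors
   P(c + Lap(lam) <= z) = exp ((z - c)/lam)/2 and the density of c + Lap(lam) at v carry exactly
   one factor exp (-c/lam).  Hence the output density is exp (-k c/lam) times a positive integral
   independent of the dataset, and the answers 1 and 2 give the ratio exp (k/lam). *)

lemma has_bochner_integral_exp_atLeast:
  fixes a c :: real
  assumes "a > 0"
  shows "has_bochner_integral lborel (\<lambda>x. exp (-a*x) * indicator {c..} x) (exp (-a*c)/a)"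
proof (rule has_bochner_integral_nn_integral)
  have "(\<integral>\<^sup>+x. ennreal (exp (-a*x)) * indicator {c..} x \<partial>lborel) = 0 - (- exp (-a*c)/a)"
  proof (rule nn_integral_FTC_atLeast)
    show "DERIV (\<lambda>x. - exp (-a*x)/a) x :> exp (-a*x)" for x
      using assms by (auto intro!: derivative_eq_intros)
    show "((\<lambda>x. - exp (-a*x)/a) \<longlongrightarrow> 0) at_top"
      using assms by real_asymp
  qed simp_all
  then show "(\<integral>\<^sup>+x. ennreal (exp (-a*x) * indicator {c..} x) \<partial>lborel) = ennreal (exp (-a*c)/a)"
    by (simp add: indicator_mult_ennreal mult.commute)
qed (use assms in \<open>simp_all add: indicator_def\<close>)

lemma has_bochner_integral_exp_atMost:
  fixes a c :: real
  assumes "a > 0"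
  shows "has_bochner_integral lborel (\<lambda>y. indicator {..c} y * exp (a*y)) (exp (a*c)/a)"
proof -
  have "(\<lambda>y. indicator {..c} y * exp (a*y)) =
      (\<lambda>y. exp (-a*(0 + (-1) * y)) * indicator {-c..} (0 + (-1) * y))"
    by (auto simp: indicator_def fun_eq_iff)
  then show ?thesis
    using has_bochner_integral_exp_atLeast[OF assms, of "-c"]
      lborel_has_bochner_integral_real_affine_iff[of "-1" "\<lambda>x. exp (-a*x) * indicator {-c..} x" _ 0]
    by (simp only:) simp
qed

lemma integral_pos_if_pos_on:
  fixes f :: "'a \<Rightarrow> real"
  assumes "integrable M f" and "\<And>x. 0 \<le> f x"
    and "A \<in> sets M" and "emeasure M A \<noteq> 0" and "\<And>x. x \<in> A \<Longrightarrow> 0 < f x"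
  shows "0 < integral\<^sup>L M f"
proof -
  have "integral\<^sup>L M f \<noteq> 0"
  proof
    assume "integral\<^sup>L M f = 0"
    then have "AE x in M. f x = 0"
      using integral_nonneg_eq_0_iff_AE[OF assms(1)] assms(2) by simp
    then have "AE x in M. x \<notin> A"
      by (rule eventually_mono) (use assms(5) in fastforce)
    moreover have "{x \<in> space M. \<not> x \<notin> A} = A"
      using sets.sets_into_space[OF assms(3)] by blast
    ultimately have "emeasure M A = 0"
      using AE_iff_measurable[OF assms(3)] by simp
    with assms(4) show False by simp
  qed
  moreover have "0 \<le> integral\<^sup>L M f"
    using assms(2) by (simp add: integral_nonneg)
  ultimately show ?thesis by simp
qed

lemma lap_pdf_le_exp:
  assumes "lam > 0"
  shows "lap_pdf lam mu y \<le> exp ((y - mu)/lam) / (2*lam)"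
proof -
  have "- \<bar>y - mu\<bar> / lam \<le> (y - mu) / lam"
    using assms by (intro divide_right_mono) auto
  then show ?thesis
    unfolding lap_pdf_def using assms by (intro divide_right_mono) auto
qed

lemma lap_cdf_below_mean:
  assumes "lam > 0" and "z \<le> mu"
  shows "lap_cdf lam mu z = exp ((z - mu)/lam) / 2"
proof -
  have pdf: "indicator {..z} y * lap_pdf lam mu y =
      exp (- mu/lam) / (2*lam) * (indicator {..z} y * exp ((1/lam) * y))" for y
  proof (cases "y \<le> z")
    case True
    then have "- \<bar>y - mu\<bar> / lam = - mu/lam + (1/lam) * y"
      using assms by (simp add: field_simps)
    then have "exp (- \<bar>y - mu\<bar> / lam) = exp (- mu/lam) * exp ((1/lam) * y)"
      by (simp only: exp_add)
    then show ?thesis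
      using True by (simp add: lap_pdf_def)
  qed simp
  have "lap_cdf lam mu z =
      exp (- mu/lam) / (2*lam) * (LINT y|lborel. indicator {..z} y * exp ((1/lam) * y))"
    unfolding lap_cdf_def pdf by (rule integral_mult_right_zero)
  also have "\<dots> = exp (- mu/lam) / (2*lam) * (exp ((1/lam) * z) / (1/lam))"
    using has_bochner_integral_integral_eq[OF has_bochner_integral_exp_atMost[of "1/lam" z]] assms
    by simp
  also have "\<dots> = (exp (- mu/lam) * exp ((1/lam) * z)) / 2"
    using assms by simp
  also have "exp (- mu/lam) * exp ((1/lam) * z) = exp ((z - mu)/lam)"
    by (simp add: diff_divide_distrib flip: exp_add)
  finally show ?thesis .
qed

lemma svt1_density_replicate_stop:
  "svt1_density (replicate (Suc m) P) theta lam D (replicate m None @ [Some v]) =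
   (LINT z|lborel. lap_pdf lam theta z * lap_cdf lam (count_query P D) z ^ m *
      lap_pdf lam (count_query P D) v * indicator {..<v} z)"
proof -
  have "replicate m None @ [Some v] \<noteq> replicate (Suc m) None"
    by (simp flip: replicate_append_same)
  moreover have "\<exists>j w. 1 \<le> j \<and> j \<le> Suc m \<and>
      replicate m None @ [Some v] = replicate (j - 1) None @ [Some w]"
    by (intro exI[of _ "Suc m"] exI[of _ v]) simp
  moreover have "(\<Prod>i<m. lap_cdf lam (count_query (replicate (Suc m) P ! i) D) z) =
      lap_cdf lam (count_query P D) z ^ m" for z
    by (simp del: replicate_Suc)
  ultimately show ?thesis
    by (simp add: svt1_density_def Let_def del: replicate_Suc)
qed

(* The integral of svt1_density_replicate_stop with the factor exp (-c/lam) of each of its m + 1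
   Laplace terms removed, c being the query answer. *)
definition svt1_stop_weight :: "real \<Rightarrow> real \<Rightarrow> nat \<Rightarrow> real \<Rightarrow> real" where
  "svt1_stop_weight theta lam m v =
     (LINT z|lborel. lap_pdf lam theta z * (exp (z/lam) / 2) ^ m * (exp (v/lam) / (2*lam)) *
        indicator {..<v} z)"

lemma svt1_stop_weight_pos:
  assumes "lam > 0"
  shows "0 < svt1_stop_weight theta lam m v"
  unfolding svt1_stop_weight_def
proof (rule integral_pos_if_pos_on)
  let ?f = "\<lambda>z. lap_pdf lam theta z * (exp (z/lam) / 2) ^ m * (exp (v/lam) / (2*lam)) *
        indicator {..<v} z"
  define C where "C = exp (- theta/lam) / (2*lam) * (exp (v/lam) / (2*lam))"
  have bound: "?f z \<le> C * (indicator {..v} z * exp ((real (Suc m) / lam) * z))" for z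
  proof (cases "z < v")
    case True
    have "?f z = lap_pdf lam theta z * (exp (z/lam) / 2) ^ m * (exp (v/lam) / (2*lam))"
      using True by simp
    also have "\<dots> \<le> exp ((z - theta)/lam) / (2*lam) * exp (z/lam) ^ m * (exp (v/lam) / (2*lam))"
      using assms by (intro mult_right_mono mult_mono lap_pdf_le_exp power_mono) auto
    also have "\<dots> = C * (indicator {..v} z * exp ((real (Suc m) / lam) * z))"
    proof -
      have "(z - theta)/lam + real m * (z/lam) = - theta/lam + (real (Suc m) / lam) * z"
        using assms by (simp add: field_simps)
      then have "exp ((z - theta)/lam) * exp (z/lam) ^ m =
          exp (- theta/lam) * exp ((real (Suc m) / lam) * z)"
        by (simp only: exp_of_nat_mult[symmetric] exp_add[symmetric])
      then show ?thesis
        using True by (simp add: C_def)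
    qed
    finally show ?thesis .
  qed (use assms in \<open>simp add: C_def\<close>)
  show "integrable lborel ?f"
  proof (rule Bochner_Integration.integrable_bound)
    have "integrable lborel (\<lambda>z. indicator {..v} z * exp ((real (Suc m) / lam) * z))"
      using assms by (intro integrable.intros[OF has_bochner_integral_exp_atMost]) simp
    then show "integrable lborel (\<lambda>z. C * (indicator {..v} z * exp ((real (Suc m) / lam) * z)))"
      by (rule integrable_mult_right)
    show "AE z in lborel.
        norm (?f z) \<le> norm (C * (indicator {..v} z * exp ((real (Suc m) / lam) * z)))"
      using bound assms by (auto simp: lap_pdf_def intro!: AE_I2 order_trans[OF _ abs_ge_self])
  qed (simp add: lap_pdf_def)
  show "0 \<le> ?f z" for z
    using assms by (simp add: lap_pdf_def)
  show "0 < ?f z" if "z \<in> {v - 1<..<v}" for z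
    using that assms by (simp add: lap_pdf_def)
qed simp_all

lemma svt1_density_replicate_stop_eq:
  assumes "lam > 0" and "v \<le> count_query P D"
  shows "svt1_density (replicate (Suc m) P) theta lam D (replicate m None @ [Some v]) =
    exp (- real (Suc m) * count_query P D / lam) * svt1_stop_weight theta lam m v"
proof -
  let ?c = "count_query P D"
  have pointwise:
    "lap_pdf lam theta z * lap_cdf lam ?c z ^ m * lap_pdf lam ?c v * indicator {..<v} z =
      exp (- ?c/lam) ^ Suc m *
      (lap_pdf lam theta z * (exp (z/lam) / 2) ^ m * (exp (v/lam) / (2*lam)) * indicator {..<v} z)"
    for z
  proof (cases "z < v")
    case True
    have "lap_cdf lam ?c z = exp (- ?c/lam + z/lam) / 2"
      using True assms by (simp add: lap_cdf_below_mean diff_divide_distrib)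
    then have cdf: "lap_cdf lam ?c z = exp (- ?c/lam) * (exp (z/lam) / 2)"
      by (simp only: exp_add times_divide_eq_right)
    have "lap_pdf lam ?c v = exp (- ?c/lam + v/lam) / (2*lam)"
      using assms by (simp add: lap_pdf_def diff_divide_distrib)
    then have pdf: "lap_pdf lam ?c v = exp (- ?c/lam) * (exp (v/lam) / (2*lam))"
      by (simp only: exp_add times_divide_eq_right)
    show ?thesis
      using True unfolding cdf pdf power_mult_distrib by (simp add: mult_ac)
  qed simp
  have "svt1_density (replicate (Suc m) P) theta lam D (replicate m None @ [Some v]) =
      (LINT z|lborel. exp (- ?c/lam) ^ Suc m *
        (lap_pdf lam theta z * (exp (z/lam) / 2) ^ m * (exp (v/lam) / (2*lam)) * indicator {..<v} z))"
    unfolding svt1_density_replicate_stop pointwise ..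
  also have "\<dots> = exp (- ?c/lam) ^ Suc m * svt1_stop_weight theta lam m v"
    unfolding svt1_stop_weight_def by (rule integral_mult_right_zero)
  also have "exp (- ?c/lam) ^ Suc m = exp (- real (Suc m) * ?c / lam)"
    by (subst exp_of_nat_mult[symmetric]) (simp add: divide_inverse algebra_simps)
  finally show ?thesis .
qed

lemma svt1_density_replicate_stop_pos:
  assumes "lam > 0" and "v \<le> count_query P D"
  shows "0 < svt1_density (replicate (Suc m) P) theta lam D (replicate m None @ [Some v])"
  using svt1_density_replicate_stop_eq[OF assms] svt1_stop_weight_pos[OF assms(1)] by simp

lemma svt1_density_replicate_stop_shift:
  assumes "lam > 0" and "v \<le> count_query P D" and "v \<le> count_query P D'"
  shows "svt1_density (replicate (Suc m) P) theta lam D (replicate m None @ [Some v]) =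
    exp (real (Suc m) * (count_query P D' - count_query P D) / lam) *
    svt1_density (replicate (Suc m) P) theta lam D' (replicate m None @ [Some v])"
proof -
  let ?c = "count_query P D" and ?c' = "count_query P D'"
  have "exp (- real (Suc m) * ?c / lam) =
      exp (real (Suc m) * (?c' - ?c) / lam) * exp (- real (Suc m) * ?c' / lam)"
    by (subst exp_add[symmetric]) (simp add: divide_inverse algebra_simps)
  then show ?thesis
    unfolding svt1_density_replicate_stop_eq[OF assms(1,2)]
      svt1_density_replicate_stop_eq[OF assms(1,3)]
    by simp
qed

theorem mainTheorem10:
  fixes eps lam :: real and k :: nat
  assumes "eps > 0" and "k \<ge> 1" and "lam > 0"
  shows "(\<exists>(D1::nat multiset) D2 D3 (Q::(nat \<Rightarrow> bool) list).
            neighboring D1 D2 \<and> neighboring D2 D3 \<and> length Q = k \<and>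
            svt1_density Q 0 lam D1 (replicate (k - 1) None @ [Some 1])
              / svt1_density Q 0 lam D3 (replicate (k - 1) None @ [Some 1])
            = exp (real k / lam))
       \<and> (lam < real k / (2 * eps) \<longrightarrow>
            (\<exists>Q::(nat \<Rightarrow> bool) list. length Q = k \<and> \<not> svt1_dp eps Q 0 lam))"
proof -
  obtain m where k: "k = Suc m"
    using assms(2) by (cases k) auto
  define P where "P = (\<lambda>x::nat. x = 0)"
  define Q where "Q = replicate (Suc m) P"
  define out where "out = replicate m None @ [Some (1::real)]"
  let ?D1 = "{#0::nat#}" and ?D2 = "{#0, 0::nat#}" and ?D3 = "{#1, 0, 0::nat#}"
  have neighbors: "neighboring ?D1 ?D2" "neighboring ?D2 ?D3"
    unfolding neighboring_def by blast+
  have answers: "count_query P ?D1 = 1" "count_query P ?D2 = 2" "count_query P ?D3 = 2"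
    by (simp_all add: P_def count_query_def)
  have D2_pos: "0 < svt1_density Q 0 lam ?D2 out"
    unfolding Q_def out_def using answers
    by (intro svt1_density_replicate_stop_pos[OF assms(3)]) simp
  have D1_D2: "svt1_density Q 0 lam ?D1 out = exp (real k / lam) * svt1_density Q 0 lam ?D2 out"
    using svt1_density_replicate_stop_shift[OF assms(3), of 1 P ?D1 ?D2] answers
    by (simp add: Q_def out_def k)
  have D3_D2: "svt1_density Q 0 lam ?D3 out = svt1_density Q 0 lam ?D2 out"
    using svt1_density_replicate_stop_shift[OF assms(3), of 1 P ?D3 ?D2] answers
    by (simp add: Q_def out_def)
  have "\<not> svt1_dp eps Q 0 lam" if "lam < real k / (2 * eps)"
  proof -
    have "eps < real k / lam"
      using that assms(1,3) by (simp add: field_simps)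
    then have "exp eps * svt1_density Q 0 lam ?D2 out < svt1_density Q 0 lam ?D1 out"
      using D1_D2 D2_pos by simp
    then show ?thesis
      unfolding svt1_dp_def using neighbors(1) by (meson not_le)
  qed
  moreover have "svt1_density Q 0 lam ?D1 out / svt1_density Q 0 lam ?D3 out = exp (real k / lam)"
    using D1_D2 D3_D2 D2_pos by simp
  moreover have "length Q = k"
    by (simp add: Q_def k)
  ultimately show ?thesis
    using neighbors unfolding out_def k by auto
qed

end
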